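(* Let $p\in Pr$ and let $\mathcal{T}$ be a set of $\mathrm{HL}$-types such that every $T\in\mathcal{T}$ has no skeleton subtypes and $p$ is lonely in $T$. If $H$ is a graph all of whose edges are labeled by elements of $\mathcal{T}\cup\{p\}$ and $\mathrm{HL}\vdash H\to p$, then $H=p^\bullet$.
   Context: Hypergraphs: given labels $C$ with $type:C\to\mathbb{N}$, a graph is $G=\langle V,E,att,lab,ext\rangle$ with finite $V,E$, $att:E\to V^\circledast$ (strings of distinct nodes), $lab:E\to C$ with $type(lab(e))=|att(e)|$, $ext\in V^\circledast$; $type(G)=|ext|$; isomorphic graphs identified. Handle $a^\bullet$: nodes $v_1..v_n$, one edge labeled $a$ with $att=v_1\dots v_n$, $ext=v_1\dots v_n$. Replacement $G[e/H]$: remove $e$, insert a disjoint copy of $H$, fuse $i$-th external node of $H$ with $i$-th attachment node of $e$; simultaneous replacement; relabeling $G[e:=a]$. $\mathrm{HL}$: primitive types $Pr$ with $type:Pr\to\mathbb{N}$ (infinitely many of each arity); symbol $\$$ of any arity. Types: primitives; $N\div D$ where $D$ has exactly one edge $d_0$ labeled $\$$, others labeled by types, $type(N)=type(D)$, $type(N\div D)=type_D(d_0)$; $\times(M)$ for a type-labeled graph $M$, $type(\times(M))=type(M)$. Subtypes of a type are the occurrences of types in its inductive construction (the type itself, and recursively subtypes of $N$ and of edge labels of $D$ for $N\div D$, and of edge labels of $M$ for $\times(M)$). Graph sequent $H\to A$ with $type(H)=type(A)$. Axioms $p^\bullet\to p$. Rules: $(\div\to)$: for $N\div D$ with $E_D=\{d_0,\dots,d_k\}$,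 $e\in E_H$ labeled $N$: from $H\to A$, $H_i\to lab(d_i)$ infer $H[e/D][d_0:=N\div D][d_1/H_1,\dots,d_k/H_k]\to A$; $(\to\div)$: from $D[d_0/F]\to N$ infer $F\to N\div D$; $(\times\to)$: if $e\in E_G$ is labeled $\times(F)$, from $G[e/F]\to A$ infer $G\to A$; $(\to\times)$: with $E_M=\{m_1,\dots,m_l\}$, from $H_i\to lab(m_i)$ infer $M[m_1/H_1,\dots,m_l/H_l]\to\times(M)$. Top occurrence: a subtype occurrence $B$ is a top occurrence within $A$ if $A=B$; or $A=\times(M)$ and $B$ is a top occurrence within $lab(e_0)$ for some $e_0\in E_M$; or $A=N\div D$ and $B$ is a top occurrence within $N$. A primitive $p$ is lonely in a type $A$ if for each top occurrence of $p$ within $A$ there is a subtype $\times(M)$ of $A$ with $|E_M|\ge2$ and some $e_0\in E_M$ whose label $lab(e_0)=p$ is that top occurrence. A type is skeleton if it equals $\times(M)$ with $E_M=\emptyset$ and $|ext_M|=|V_M|$. *)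

theory Defs
  imports Main "HOL-Library.Nat_Bijection"
begin

text \<open>A concrete hypergraph with nodes and edges drawn from nat.  Graphs are only
  meaningful up to isomorphism (see giso); labels outside the edge set are irrelevant.\<close>

datatype 'l hgraph = HG (nodes: "nat set") (edges: "nat set") (att: "nat \<Rightarrow> nat list")
                        (lab: "nat \<Rightarrow> 'l") (ext: "nat list")

definition wfg :: "'l hgraph \<Rightarrow> bool" where
  "wfg G \<longleftrightarrow> finite (nodes G) \<and> finite (edges G)
     \<and> (\<forall>e\<in>edges G. distinct (att G e) \<and> set (att G e) \<subseteq> nodes G)
     \<and> distinct (ext G) \<and> set (ext G) \<subseteq> nodes G"

definition giso :: "('a \<Rightarrow> 'b \<Rightarrow> bool) \<Rightarrow> 'a hgraph \<Rightarrow> 'b hgraph \<Rightarrow> bool" where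
  "giso R G G' \<longleftrightarrow> (\<exists>f g. bij_betw f (nodes G) (nodes G') \<and> bij_betw g (edges G) (edges G')
     \<and> (\<forall>e\<in>edges G. att G' (g e) = map f (att G e) \<and> R (lab G e) (lab G' (g e)))
     \<and> ext G' = map f (ext G))"

lemma giso_mono [mono]: "(\<And>x y. R x y \<longrightarrow> S x y) \<Longrightarrow> giso R G G' \<longrightarrow> giso S G G'"
  unfolding giso_def by blast

text \<open>Fresh-copy encoding of nodes/edges used by replacement: index 0 = the host graph,
  index Suc e = the copy of the graph inserted in place of edge e.\<close>
definition cp :: "nat \<Rightarrow> nat \<Rightarrow> nat" where "cp i x = prod_encode (i, x)"

text \<open>Simultaneous replacement G[e/sigma(e) for all e with sigma e \<noteq> None].\<close>
definition repl :: "'l hgraph \<Rightarrow> (nat \<Rightarrow> 'l hgraph option) \<Rightarrow> 'l hgraph" where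
  "repl G \<sigma> = (let
     R = {e \<in> edges G. \<sigma> e \<noteq> None};
     vm = (\<lambda>e v. let H = the (\<sigma> e) in
             if v \<in> set (ext H)
             then cp 0 (att G e ! (THE i. i < length (ext H) \<and> ext H ! i = v))
             else cp (Suc e) v)
   in HG (cp 0 ` nodes G \<union> (\<Union>e\<in>R. vm e ` nodes (the (\<sigma> e))))
         (cp 0 ` (edges G - R) \<union> (\<Union>e\<in>R. cp (Suc e) ` edges (the (\<sigma> e))))
         (\<lambda>x. case prod_decode x of (0, y) \<Rightarrow> map (cp 0) (att G y)
                | (Suc e, y) \<Rightarrow> map (vm e) (att (the (\<sigma> e)) y))
         (\<lambda>x. case prod_decode x of (0, y) \<Rightarrow> lab G y
                | (Suc e, y) \<Rightarrow> lab (the (\<sigma> e)) y)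
         (map (cp 0) (ext G)))"

definition relab :: "'l hgraph \<Rightarrow> nat \<Rightarrow> 'l \<Rightarrow> 'l hgraph" where
  "relab G e a = HG (nodes G) (edges G) (att G) ((lab G)(e := a)) (ext G)"

text \<open>Prim a k: primitive type named a of arity k (infinitely many of each arity).
  In Div N D, the graph D is labelled by tp option, where None stands for the dollar symbol.\<close>
datatype tp = Prim nat nat | Div tp "tp option hgraph" | Times "tp hgraph"

definition tp_type :: "tp \<Rightarrow> nat" where
  "tp_type A = (case A of Prim a k \<Rightarrow> k
     | Div N D \<Rightarrow> length (att D (THE d. d \<in> edges D \<and> lab D d = None))
     | Times M \<Rightarrow> length (ext M))"

inductive wf_tp :: "tp \<Rightarrow> bool" where
  "wf_tp (Prim a k)"
| "wfg D \<Longrightarrow> (\<exists>!d. d \<in> edges D \<and> lab D d = None)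
   \<Longrightarrow> (\<forall>d\<in>edges D. \<forall>t. lab D d = Some t \<longrightarrow> wf_tp t \<and> tp_type t = length (att D d))
   \<Longrightarrow> wf_tp N \<Longrightarrow> tp_type N = length (ext D) \<Longrightarrow> wf_tp (Div N D)"
| "wfg M \<Longrightarrow> (\<forall>e\<in>edges M. wf_tp (lab M e) \<and> tp_type (lab M e) = length (att M e))
   \<Longrightarrow> wf_tp (Times M)"

definition wfg_t :: "tp hgraph \<Rightarrow> bool" where
  "wfg_t H \<longleftrightarrow> wfg H \<and> (\<forall>e\<in>edges H. wf_tp (lab H e) \<and> tp_type (lab H e) = length (att H e))"

definition seq_ok :: "tp hgraph \<Rightarrow> tp \<Rightarrow> bool" where
  "seq_ok H A \<longleftrightarrow> wfg_t H \<and> wf_tp A \<and> length (ext H) = tp_type A"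

inductive teq :: "tp \<Rightarrow> tp \<Rightarrow> bool" where
  "teq (Prim a k) (Prim a k)"
| "teq N N' \<Longrightarrow> giso (\<lambda>x y. (x = None \<and> y = None) \<or> (\<exists>s t. x = Some s \<and> y = Some t \<and> teq s t)) D D'
   \<Longrightarrow> teq (Div N D) (Div N' D')"
| "giso teq M M' \<Longrightarrow> teq (Times M) (Times M')"

definition handle :: "tp \<Rightarrow> tp hgraph" where
  "handle A = HG {0..<tp_type A} {0} (\<lambda>_. [0..<tp_type A]) (\<lambda>_. A) [0..<tp_type A]"

inductive HL :: "tp hgraph \<Rightarrow> tp \<Rightarrow> bool" where
  iso: "HL H A \<Longrightarrow> giso teq H H' \<Longrightarrow> teq A A' \<Longrightarrow> seq_ok H' A' \<Longrightarrow> HL H' A'"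
| ax: "HL (handle (Prim a k)) (Prim a k)"
| div_l: "HL H A \<Longrightarrow> e \<in> edges H \<Longrightarrow> lab H e = N \<Longrightarrow> d0 \<in> edges D \<Longrightarrow> lab D d0 = None
   \<Longrightarrow> (\<forall>d \<in> edges D - {d0}. HL (Hs d) (the (lab D d)))
   \<Longrightarrow> G = repl (relab (repl H (\<lambda>x. if x = e then Some (map_hgraph the D) else None))
                         (cp (Suc e) d0) (Div N D))
              (\<lambda>x. if x \<in> cp (Suc e) ` (edges D - {d0}) then Some (Hs (snd (prod_decode x))) else None)
   \<Longrightarrow> seq_ok G A \<Longrightarrow> HL G A"
| div_r: "HL (repl (map_hgraph the D) (\<lambda>x. if x = d0 then Some F else None)) N
   \<Longrightarrow> d0 \<in> edges D \<Longrightarrow> lab D d0 = None \<Longrightarrow> seq_ok F (Div N D) \<Longrightarrow> HL F (Div N D)"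
| times_l: "HL (repl G (\<lambda>x. if x = e then Some F else None)) A \<Longrightarrow> e \<in> edges G
   \<Longrightarrow> lab G e = Times F \<Longrightarrow> seq_ok G A \<Longrightarrow> HL G A"
| times_r: "(\<forall>m \<in> edges M. HL (Hs m) (lab M m))
   \<Longrightarrow> G = repl M (\<lambda>m. if m \<in> edges M then Some (Hs m) else None)
   \<Longrightarrow> seq_ok G (Times M) \<Longrightarrow> HL G (Times M)"

text \<open>Positions of subtype occurrences: SNum goes to the numerator N of N div D,
  SDen d to the label of edge d of D, SMul e to the label of edge e of M in times(M).\<close>
datatype step = SNum | SDen nat | SMul nat

inductive occ :: "tp \<Rightarrow> step list \<Rightarrow> tp \<Rightarrow> bool" where
  "occ A [] A"
| "occ N ps B \<Longrightarrow> occ (Div N D) (SNum # ps) B"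
| "d \<in> edges D \<Longrightarrow> lab D d = Some L \<Longrightarrow> occ L ps B \<Longrightarrow> occ (Div N D) (SDen d # ps) B"
| "e \<in> edges M \<Longrightarrow> occ (lab M e) ps B \<Longrightarrow> occ (Times M) (SMul e # ps) B"

definition top_occ :: "tp \<Rightarrow> step list \<Rightarrow> tp \<Rightarrow> bool" where
  "top_occ A ps B \<longleftrightarrow> occ A ps B \<and> (\<forall>d. SDen d \<notin> set ps)"

definition lonely :: "tp \<Rightarrow> tp \<Rightarrow> bool" where
  "lonely p A \<longleftrightarrow> (\<forall>ps. top_occ A ps p \<longrightarrow>
     (\<exists>ps' e M. ps = ps' @ [SMul e] \<and> occ A ps' (Times M) \<and> 2 \<le> card (edges M)
                \<and> e \<in> edges M \<and> lab M e = p))"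

definition skeleton :: "tp \<Rightarrow> bool" where
  "skeleton B \<longleftrightarrow> (\<exists>M. B = Times M \<and> edges M = {} \<and> length (ext M) = card (nodes M))"

definition subtype :: "tp \<Rightarrow> tp \<Rightarrow> bool" where
  "subtype B A \<longleftrightarrow> (\<exists>ps. occ A ps B)"

end

theory Submission
  imports Defs
begin

text \<open>Induction on the derivation of \<open>H \<rightarrow> p\<close>, with the invariant that every label of \<open>H\<close> is,
  up to type equivalence, either \<open>p\<close> or a type without skeleton subtypes in which \<open>p\<close> is lonely;
  the invariant passes to numerators and to the components of a product other than \<open>p\<close>.
  Right rules cannot conclude a primitive type. In a left rule for \<open>N \<div> D\<close> the premise concludes
  \<open>p\<close>, so inductively it is \<open>p\<^sup>\<bullet>\<close>, whose only edge would be labelled \<open>N\<close>; but \<open>N \<noteq> p\<close>, since a top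
  occurrence of \<open>p\<close> as a numerator is not inside a product. In a left rule for \<open>\<times>(F)\<close> the premise
  \<open>G[e/F]\<close> is \<open>p\<^sup>\<bullet>\<close> only if \<open>F\<close> has no edges and only external nodes (excluded: \<open>\<times>(F)\<close> would be a
  skeleton) or a single edge labelled \<open>p\<close> (excluded by loneliness).\<close>

lemma gisoE:
  assumes "giso R G G'"
  obtains f g where "bij_betw f (nodes G) (nodes G')" "bij_betw g (edges G) (edges G')"
    "\<And>e. e \<in> edges G \<Longrightarrow> att G' (g e) = map f (att G e)"
    "\<And>e. e \<in> edges G \<Longrightarrow> R (lab G e) (lab G' (g e))"
    "ext G' = map f (ext G)"
  using assms unfolding giso_def by blast

lemma giso_refl: "(\<And>e. e \<in> edges G \<Longrightarrow> R (lab G e) (lab G e)) \<Longrightarrow> giso R G G"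
  unfolding giso_def by (rule exI[of _ id], rule exI[of _ id]) (auto simp: bij_betw_id)

lemma giso_trans:
  assumes "giso R G1 G2" "giso S G2 G3" "\<And>x y z. R x y \<Longrightarrow> S y z \<Longrightarrow> T x z"
  shows "giso T G1 G3"
proof -
  obtain f g where f: "bij_betw f (nodes G1) (nodes G2)" and g: "bij_betw g (edges G1) (edges G2)"
    and att: "\<And>e. e \<in> edges G1 \<Longrightarrow> att G2 (g e) = map f (att G1 e)"
    and lab: "\<And>e. e \<in> edges G1 \<Longrightarrow> R (lab G1 e) (lab G2 (g e))"
    and ext: "ext G2 = map f (ext G1)"
    using assms(1) by (elim gisoE) blast
  obtain f' g' where f': "bij_betw f' (nodes G2) (nodes G3)" and g': "bij_betw g' (edges G2) (edges G3)"
    and att': "\<And>e. e \<in> edges G2 \<Longrightarrow> att G3 (g' e) = map f' (att G2 e)"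
    and lab': "\<And>e. e \<in> edges G2 \<Longrightarrow> S (lab G2 e) (lab G3 (g' e))"
    and ext': "ext G3 = map f' (ext G2)"
    using assms(2) by (elim gisoE) blast
  have "\<And>e. e \<in> edges G1 \<Longrightarrow> g e \<in> edges G2"
    using g bij_betwE by blast
  then have "\<forall>e\<in>edges G1. att G3 ((g' \<circ> g) e) = map (f' \<circ> f) (att G1 e)
      \<and> T (lab G1 e) (lab G3 ((g' \<circ> g) e))"
    using att att' lab lab' assms(3) by fastforce
  moreover have "bij_betw (f' \<circ> f) (nodes G1) (nodes G3)" "bij_betw (g' \<circ> g) (edges G1) (edges G3)"
    using f f' g g' by (auto intro: bij_betw_trans)
  ultimately show ?thesis
    unfolding giso_def using ext ext' by fastforce
qed

lemma teq_refl: "teq A A"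
proof (induction A)
  case (Prim a k)
  show ?case by (rule teq.intros)
next
  case (Div N D)
  have "giso (\<lambda>x y. x = None \<and> y = None \<or> (\<exists>s t. x = Some s \<and> y = Some t \<and> teq s t)) D D"
    by (rule giso_refl) (metis Div.IH(2) hgraph.set_sel(1) not_None_eq option.set_intros rangeI)
  with Div.IH(1) show ?case by (rule teq.intros)
next
  case (Times M)
  have "giso teq M M"
    by (rule giso_refl) (meson Times.IH hgraph.set_sel(1) rangeI)
  then show ?case by (rule teq.intros)
qed

lemma teq_trans: "teq A B \<Longrightarrow> teq B C \<Longrightarrow> teq A C"
proof (induction A B arbitrary: C rule: teq.induct)
  case (1 a k)
  then show ?case .
next
  case (2 N N' D D')
  from \<open>teq (Div N' D') C\<close> obtain N'' D'' where C: "C = Div N'' D''" "teq N' N''"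
    "giso (\<lambda>x y. x = None \<and> y = None \<or> (\<exists>s t. x = Some s \<and> y = Some t \<and> teq s t)) D' D''"
    by (cases rule: teq.cases) auto
  have "giso (\<lambda>x y. x = None \<and> y = None \<or> (\<exists>s t. x = Some s \<and> y = Some t \<and> teq s t)) D D''"
    by (rule giso_trans[OF 2(3) C(3)]) auto
  with 2(2)[OF C(2)] show ?case
    unfolding C(1) by (rule teq.intros)
next
  case (3 M M')
  from \<open>teq (Times M') C\<close> obtain M'' where C: "C = Times M''" "giso teq M' M''"
    by (cases rule: teq.cases) auto
  have "giso teq M M''"
    by (rule giso_trans[OF 3(1) C(2)]) auto
  then show ?case
    unfolding C(1) by (rule teq.intros)
qed

lemma teq_Prim_left_iff [simp]: "teq (Prim a k) Y \<longleftrightarrow> Y = Prim a k"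
  by (auto elim: teq.cases intro: teq.intros)

lemma teq_Prim_right_iff [simp]: "teq Y (Prim a k) \<longleftrightarrow> Y = Prim a k"
  by (auto elim: teq.cases intro: teq.intros)

lemma cp_eq_iff [simp]: "cp i x = cp j y \<longleftrightarrow> i = j \<and> x = y"
  unfolding cp_def by (simp add: prod_encode_eq)

lemma prod_decode_cp [simp]: "prod_decode (cp i x) = (i, x)"
  unfolding cp_def by simp

lemma ext_repl [simp]: "ext (repl G \<sigma>) = map (cp 0) (ext G)"
  unfolding repl_def Let_def by simp

lemma repl_edge_kept:
  assumes "x \<in> edges G" "\<sigma> x = None"
  shows "cp 0 x \<in> edges (repl G \<sigma>) \<and> lab (repl G \<sigma>) (cp 0 x) = lab G x"
  using assms unfolding repl_def Let_def by auto

lemma repl_edge_inserted: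
  assumes "x \<in> edges G" "\<sigma> x = Some H" "y \<in> edges H"
  shows "cp (Suc x) y \<in> edges (repl G \<sigma>) \<and> lab (repl G \<sigma>) (cp (Suc x) y) = lab H y"
  using assms unfolding repl_def Let_def by auto

lemma repl_node_inserted:
  assumes "x \<in> edges G" "\<sigma> x = Some H" "v \<in> nodes H" "v \<notin> set (ext H)"
  shows "cp (Suc x) v \<in> nodes (repl G \<sigma>)"
  using assms unfolding repl_def Let_def by (auto intro!: image_eqI[of _ _ v])

lemma lab_repl_single:
  assumes "z \<in> edges (repl G (\<lambda>x. if x = e then Some F else None))"
  shows "lab (repl G (\<lambda>x. if x = e then Some F else None)) z \<in> lab G ` edges G \<union> lab F ` edges F"
  using assms unfolding repl_def Let_def by (auto split: if_splits)

lemma subtype_refl: "subtype A A"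
  unfolding subtype_def by (blast intro: occ.intros(1))

lemma subtype_Div_num: "subtype B N \<Longrightarrow> subtype B (Div N D)"
  unfolding subtype_def by (blast intro: occ.intros(2))

lemma subtype_Times_lab: "e \<in> edges M \<Longrightarrow> subtype B (lab M e) \<Longrightarrow> subtype B (Times M)"
  unfolding subtype_def by (blast intro: occ.intros(4))

lemma skeleton_Times_iff: "skeleton (Times M) \<longleftrightarrow> edges M = {} \<and> length (ext M) = card (nodes M)"
  unfolding skeleton_def by simp

lemma lonely_Div_num_neq: "lonely p (Div N D) \<Longrightarrow> N \<noteq> p"
proof
  assume "lonely p (Div N D)" "N = p"
  moreover have "top_occ (Div N D) [SNum] N"
    unfolding top_occ_def by (auto intro: occ.intros)
  ultimately show False
    unfolding lonely_def by auto
qed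

lemma lonely_Div_num:
  assumes "lonely p (Div N D)"
  shows "lonely p N"
  unfolding lonely_def
proof (intro allI impI)
  fix ps assume "top_occ N ps p"
  then have "top_occ (Div N D) (SNum # ps) p"
    unfolding top_occ_def by (auto intro: occ.intros)
  then obtain ps' e M where ps': "SNum # ps = ps' @ [SMul e]" "occ (Div N D) ps' (Times M)"
    "2 \<le> card (edges M)" "e \<in> edges M" "lab M e = p"
    using assms unfolding lonely_def by blast
  then obtain ps'' where "ps' = SNum # ps''"
    by (cases ps') auto
  with ps' show "\<exists>ps' e M. ps = ps' @ [SMul e] \<and> occ N ps' (Times M) \<and> 2 \<le> card (edges M)
      \<and> e \<in> edges M \<and> lab M e = p"
    by (auto elim: occ.cases)
qed

lemma lonely_Times_lab:
  assumes "lonely p (Times M)" "e \<in> edges M" "lab M e \<noteq> p"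
  shows "lonely p (lab M e)"
  unfolding lonely_def
proof (intro allI impI)
  fix ps assume ps: "top_occ (lab M e) ps p"
  then have "top_occ (Times M) (SMul e # ps) p"
    unfolding top_occ_def using assms(2) by (auto intro: occ.intros)
  then obtain ps' e' M' where ps': "SMul e # ps = ps' @ [SMul e']" "occ (Times M) ps' (Times M')"
    "2 \<le> card (edges M')" "e' \<in> edges M'" "lab M' e' = p"
    using assms(1) unfolding lonely_def by blast
  have "ps' \<noteq> []"
  proof
    assume "ps' = []"
    then have "ps = []"
      using ps'(1) by simp
    then show False
      using ps assms(3) unfolding top_occ_def by (auto elim: occ.cases)
  qed
  then obtain ps'' where "ps' = SMul e # ps''"
    using ps'(1) by (cases ps') auto
  with ps' show "\<exists>ps' e' M'. ps = ps' @ [SMul e'] \<and> occ (lab M e) ps' (Times M')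
      \<and> 2 \<le> card (edges M') \<and> e' \<in> edges M' \<and> lab M' e' = p"
    by (auto elim: occ.cases)
qed

lemma lonely_Times_singleton_neq:
  assumes "lonely p (Times M)" "edges M = {e}"
  shows "lab M e \<noteq> p"
proof
  assume "lab M e = p"
  then have "top_occ (Times M) [SMul e] p"
    unfolding top_occ_def using assms(2) by (auto intro: occ.intros)
  then obtain ps' e' M' where "[SMul e] = ps' @ [SMul e']" "occ (Times M) ps' (Times M')"
    "2 \<le> card (edges M')"
    using assms(1) unfolding lonely_def by blast
  then show False
    using assms(2) by (cases ps') (auto elim: occ.cases)
qed

definition admissible :: "nat \<Rightarrow> nat \<Rightarrow> tp \<Rightarrow> bool" where
  "admissible a k Y \<longleftrightarrow>
     Y = Prim a k \<or> ((\<forall>B. subtype B Y \<longrightarrow> \<not> skeleton B) \<and> lonely (Prim a k) Y)"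

text \<open>The rule \<open>iso\<close> of \<^const>\<open>HL\<close> replaces labels by \<^const>\<open>teq\<close>-equivalent ones, under which
  \<^const>\<open>admissible\<close> itself is not obviously invariant; the invariant is therefore taken up to \<^const>\<open>teq\<close>.\<close>

definition admissible_upto_teq :: "nat \<Rightarrow> nat \<Rightarrow> tp \<Rightarrow> bool" where
  "admissible_upto_teq a k X \<longleftrightarrow> (\<exists>Y. teq X Y \<and> admissible a k Y)"

lemma admissible_imp_admissible_upto_teq: "admissible a k X \<Longrightarrow> admissible_upto_teq a k X"
  unfolding admissible_upto_teq_def using teq_refl by blast

lemma admissible_upto_teq_teq: "teq X Y \<Longrightarrow> admissible_upto_teq a k Y \<Longrightarrow> admissible_upto_teq a k X"
  unfolding admissible_upto_teq_def using teq_trans by blast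

lemma admissible_upto_teq_Div:
  assumes "admissible_upto_teq a k (Div N D)"
  shows "admissible_upto_teq a k N" and "N \<noteq> Prim a k"
proof -
  obtain N' D' where N': "teq N N'" and adm: "admissible a k (Div N' D')"
    using assms unfolding admissible_upto_teq_def by (auto elim: teq.cases)
  then have lo: "lonely (Prim a k) (Div N' D')"
    unfolding admissible_def by simp
  have "admissible a k N'"
    using adm lonely_Div_num[OF lo] subtype_Div_num unfolding admissible_def by blast
  with N' show "admissible_upto_teq a k N"
    unfolding admissible_upto_teq_def by blast
  show "N \<noteq> Prim a k"
    using N' lonely_Div_num_neq[OF lo] by auto
qed

lemma admissible_upto_teq_TimesE:
  assumes "admissible_upto_teq a k (Times F)"
  obtains F' f g where "bij_betw f (nodes F) (nodes F')" "bij_betw g (edges F) (edges F')"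
    "\<And>e. e \<in> edges F \<Longrightarrow> teq (lab F e) (lab F' (g e))" "ext F' = map f (ext F)"
    "\<And>B. subtype B (Times F') \<Longrightarrow> \<not> skeleton B" "lonely (Prim a k) (Times F')"
proof -
  obtain F' where iso: "giso teq F F'" and adm: "admissible a k (Times F')"
    using assms unfolding admissible_upto_teq_def by (auto elim: teq.cases)
  obtain f g where "bij_betw f (nodes F) (nodes F')" "bij_betw g (edges F) (edges F')"
    "\<And>e. e \<in> edges F \<Longrightarrow> teq (lab F e) (lab F' (g e))" "ext F' = map f (ext F)"
    using iso by (elim gisoE) blast
  moreover have "\<And>B. subtype B (Times F') \<Longrightarrow> \<not> skeleton B" "lonely (Prim a k) (Times F')"
    using adm unfolding admissible_def by auto
  ultimately show thesis
    by (rule that)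
qed

lemma admissible_upto_teq_Times_lab:
  assumes "admissible_upto_teq a k (Times F)" "e \<in> edges F"
  shows "admissible_upto_teq a k (lab F e)"
proof -
  obtain F' g where g: "bij_betw g (edges F) (edges F')" and teq: "teq (lab F e) (lab F' (g e))"
    and ns: "\<And>B. subtype B (Times F') \<Longrightarrow> \<not> skeleton B" and lo: "lonely (Prim a k) (Times F')"
    using assms by (elim admissible_upto_teq_TimesE) blast
  have e': "g e \<in> edges F'"
    using g assms(2) bij_betwE by blast
  have "admissible a k (lab F' (g e))"
    using lonely_Times_lab[OF lo e'] ns subtype_Times_lab[OF e'] unfolding admissible_def by blast
  with teq show ?thesis
    unfolding admissible_upto_teq_def by blast
qed

lemma admissible_upto_teq_Times_internal_node:
  assumes "admissible_upto_teq a k (Times F)" "wfg F" "edges F = {}"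
  shows "\<exists>v\<in>nodes F. v \<notin> set (ext F)"
proof -
  obtain F' f g where f: "bij_betw f (nodes F) (nodes F')" and g: "bij_betw g (edges F) (edges F')"
    and ext: "ext F' = map f (ext F)" and ns: "\<And>B. subtype B (Times F') \<Longrightarrow> \<not> skeleton B"
    using assms(1) by (elim admissible_upto_teq_TimesE) blast
  have "edges F' = {}"
    using g assms(3) by (simp add: bij_betw_def)
  with ns[OF subtype_refl] have "length (ext F') \<noteq> card (nodes F')"
    by (simp add: skeleton_Times_iff)
  then have "card (set (ext F)) \<noteq> card (nodes F)"
    using ext bij_betw_same_card[OF f] assms(2) by (simp add: wfg_def distinct_card)
  moreover have "set (ext F) \<subseteq> nodes F"
    using assms(2) by (simp add: wfg_def)
  ultimately show ?thesis
    by (metis subsetI subset_antisym)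
qed

lemma admissible_upto_teq_Times_singleton:
  assumes "admissible_upto_teq a k (Times F)" "edges F = {e}"
  shows "lab F e \<noteq> Prim a k"
proof -
  obtain F' g where g: "bij_betw g (edges F) (edges F')" and teq: "teq (lab F e) (lab F' (g e))"
    and lo: "lonely (Prim a k) (Times F')"
    using assms by (elim admissible_upto_teq_TimesE) blast
  have "edges F' = {g e}"
    using g assms(2) by (simp add: bij_betw_def)
  then have "lab F' (g e) \<noteq> Prim a k"
    using lo by (rule lonely_Times_singleton_neq[rotated])
  with teq show ?thesis
    by auto
qed

definition is_handle :: "nat \<Rightarrow> nat \<Rightarrow> tp hgraph \<Rightarrow> bool" where
  "is_handle a k H \<longleftrightarrow> (\<exists>x. edges H = {x} \<and> lab H x = Prim a k \<and> att H x = ext H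
     \<and> nodes H = set (ext H) \<and> length (ext H) = k \<and> distinct (ext H))"

lemma is_handle_handle: "is_handle a k (handle (Prim a k))"
  unfolding is_handle_def handle_def tp_type_def by simp

lemma is_handle_giso:
  assumes "is_handle a k H" "giso teq H H'"
  shows "is_handle a k H'"
proof -
  obtain x where x: "edges H = {x}" "lab H x = Prim a k" "att H x = ext H"
    "nodes H = set (ext H)" "length (ext H) = k" "distinct (ext H)"
    using assms(1) unfolding is_handle_def by blast
  obtain f g where f: "bij_betw f (nodes H) (nodes H')" and g: "bij_betw g (edges H) (edges H')"
    and att: "\<And>e. e \<in> edges H \<Longrightarrow> att H' (g e) = map f (att H e)"
    and lab: "\<And>e. e \<in> edges H \<Longrightarrow> teq (lab H e) (lab H' (g e))"
    and ext: "ext H' = map f (ext H)"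
    using assms(2) by (elim gisoE) blast
  have "edges H' = {g x}" "lab H' (g x) = Prim a k" "att H' (g x) = ext H'"
    using g x lab[of x] att[of x] ext by (auto simp: bij_betw_def)
  moreover have "nodes H' = set (ext H')" "length (ext H') = k" "distinct (ext H')"
    using f x ext by (auto simp: bij_betw_def distinct_map)
  ultimately show ?thesis
    unfolding is_handle_def by blast
qed

lemma is_handle_giso_handle:
  assumes "is_handle a k H"
  shows "giso (=) H (handle (Prim a k))"
proof -
  obtain x where x: "edges H = {x}" "lab H x = Prim a k" "att H x = ext H"
    "nodes H = set (ext H)" "length (ext H) = k" "distinct (ext H)"
    using assms unfolding is_handle_def by blast
  have nth: "bij_betw (nth (ext H)) {..<k} (nodes H)"
    using x bij_betw_nth by blast
  define f where "f = inv_into {..<k} (nth (ext H))"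
  have f: "bij_betw f (nodes H) {0..<k}"
    unfolding f_def using nth bij_betw_inv_into by (metis atLeast0LessThan)
  have "map f (ext H) = [0..<k]"
  proof (rule nth_equalityI)
    fix i assume "i < length (map f (ext H))"
    with nth x show "map f (ext H) ! i = [0..<k] ! i"
      unfolding f_def by (simp add: bij_betw_def inv_into_f_f)
  qed (use x in simp)
  with f x show ?thesis
    unfolding giso_def handle_def tp_type_def
    by (intro exI[of _ f] exI[of _ "\<lambda>_. 0"]) (simp add: bij_betw_def)
qed

lemma is_handle_repl_single:
  assumes "is_handle a k (repl G (\<lambda>x. if x = e then Some F else None))" "e \<in> edges G"
  obtains "edges F = {}" "nodes F \<subseteq> set (ext F)"
  | f where "edges F = {f}" "lab F f = Prim a k"
proof -
  let ?R = "repl G (\<lambda>x. if x = e then Some F else None)"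
  obtain x where x: "edges ?R = {x}" "lab ?R x = Prim a k" "nodes ?R = set (ext ?R)"
    using assms(1) unfolding is_handle_def by blast
  have inserted: "cp (Suc e) f \<in> edges ?R" "lab ?R (cp (Suc e) f) = lab F f" if "f \<in> edges F" for f
    using repl_edge_inserted[of e G _ F f] assms(2) that by simp_all
  show thesis
  proof (cases "edges F = {}")
    case True
    have "v \<in> set (ext F)" if "v \<in> nodes F" for v
    proof (rule ccontr)
      assume "v \<notin> set (ext F)"
      then have "cp (Suc e) v \<in> nodes ?R"
        using repl_node_inserted[of e G _ F v] assms(2) \<open>v \<in> nodes F\<close> by simp
      then show False
        using x(3) by auto
    qed
    with True show thesis
      using that(1) by blast
  next
    case False
    then obtain f where f: "f \<in> edges F"
      by blast
    have "edges F \<subseteq> {f}"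
    proof
      fix f' assume "f' \<in> edges F"
      then have "cp (Suc e) f' = cp (Suc e) f"
        using inserted(1)[OF \<open>f' \<in> edges F\<close>] inserted(1)[OF f] x(1) by simp
      then show "f' \<in> {f}"
        by simp
    qed
    with f have "edges F = {f}"
      by blast
    moreover have "lab F f = Prim a k"
      using inserted[OF f] x(1,2) by simp
    ultimately show thesis
      using that(2) by blast
  qed
qed

lemma repl_admissible_Times_not_handle:
  assumes "admissible_upto_teq a k (Times F)" "wfg F" "e \<in> edges G"
  shows "\<not> is_handle a k (repl G (\<lambda>x. if x = e then Some F else None))"
proof
  assume "is_handle a k (repl G (\<lambda>x. if x = e then Some F else None))"
  then show False
    using admissible_upto_teq_Times_internal_node[OF assms(1,2)]
      admissible_upto_teq_Times_singleton[OF assms(1)]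
    by (elim is_handle_repl_single[OF _ assms(3)]) auto
qed

lemma giso_admissible_labels:
  assumes "giso teq H H'" "\<forall>e\<in>edges H'. admissible_upto_teq a k (lab H' e)"
  shows "\<forall>e\<in>edges H. admissible_upto_teq a k (lab H e)"
proof
  fix e assume "e \<in> edges H"
  moreover obtain g where "bij_betw g (edges H) (edges H')"
    "\<And>e. e \<in> edges H \<Longrightarrow> teq (lab H e) (lab H' (g e))"
    using assms(1) by (elim gisoE) blast
  ultimately show "admissible_upto_teq a k (lab H e)"
    using assms(2) admissible_upto_teq_teq bij_betwE by metis
qed

lemma repl_single_admissible_labels:
  assumes "admissible_upto_teq a k (Times F)" "\<forall>x\<in>edges G. admissible_upto_teq a k (lab G x)"
  shows "\<forall>z\<in>edges (repl G (\<lambda>x. if x = e then Some F else None)).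
    admissible_upto_teq a k (lab (repl G (\<lambda>x. if x = e then Some F else None)) z)"
proof
  fix z assume "z \<in> edges (repl G (\<lambda>x. if x = e then Some F else None))"
  then have "lab (repl G (\<lambda>x. if x = e then Some F else None)) z \<in> lab G ` edges G \<union> lab F ` edges F"
    by (rule lab_repl_single)
  then show "admissible_upto_teq a k (lab (repl G (\<lambda>x. if x = e then Some F else None)) z)"
    using admissible_upto_teq_Times_lab[OF assms(1)] assms(2) by auto
qed

lemma div_l_conclusion_labels:
  assumes "e \<in> edges H" "d0 \<in> edges D" "\<sigma> (cp (Suc e) d0) = None" "\<And>x. \<sigma> (cp 0 x) = None"
    and "G = repl (relab (repl H (\<lambda>x. if x = e then Some (map_hgraph the D) else None))
                         (cp (Suc e) d0) (Div N D)) \<sigma>"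
  shows "Div N D \<in> lab G ` edges G" and "x \<in> edges H - {e} \<Longrightarrow> lab H x \<in> lab G ` edges G"
proof -
  let ?H1 = "repl H (\<lambda>x. if x = e then Some (map_hgraph the D) else None)"
  let ?H2 = "relab ?H1 (cp (Suc e) d0) (Div N D)"
  have "cp (Suc e) d0 \<in> edges ?H2" "lab ?H2 (cp (Suc e) d0) = Div N D"
    using repl_edge_inserted[of e H _ "map_hgraph the D" d0] assms(1,2)
    by (simp_all add: relab_def hgraph.map_sel)
  then show "Div N D \<in> lab G ` edges G"
    using repl_edge_kept[of "cp (Suc e) d0" ?H2 \<sigma>] assms(3,5) by force
  assume "x \<in> edges H - {e}"
  then have "cp 0 x \<in> edges ?H2" "lab ?H2 (cp 0 x) = lab H x"
    using repl_edge_kept[of x H] by (simp_all add: relab_def)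
  then show "lab H x \<in> lab G ` edges G"
    using repl_edge_kept[of "cp 0 x" ?H2 \<sigma>] assms(4,5) by force
qed

lemma HL_Prim_is_handle:
  assumes "HL H A" "A = Prim a k" "\<forall>e\<in>edges H. admissible_upto_teq a k (lab H e)"
  shows "is_handle a k H"
  using assms
proof (induction rule: HL.induct)
  case (iso H A H' A')
  have "A = Prim a k"
    using iso.hyps(3) iso.prems(1) by simp
  moreover have "\<forall>e\<in>edges H. admissible_upto_teq a k (lab H e)"
    using giso_admissible_labels[OF iso.hyps(2) iso.prems(2)] .
  ultimately show ?case
    using iso.IH iso.hyps(2) is_handle_giso by blast
next
  case (ax a' k')
  then show ?case
    using is_handle_handle by simp
next
  case (div_l H A e N d0 D Hs G)
  have labels: "Div N D \<in> lab G ` edges G" "\<And>x. x \<in> edges H - {e} \<Longrightarrow> lab H x \<in> lab G ` edges G"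
    using div_l_conclusion_labels[OF div_l.hyps(2,4) _ _ div_l.hyps(6)]
    by (simp_all add: image_iff)
  then have "admissible_upto_teq a k (Div N D)"
    using div_l.prems(2) by auto
  note N = admissible_upto_teq_Div[OF this]
  have "\<forall>x\<in>edges H. admissible_upto_teq a k (lab H x)"
  proof
    fix x assume "x \<in> edges H"
    then show "admissible_upto_teq a k (lab H x)"
      using labels(2)[of x] N(1) div_l.hyps(3) div_l.prems(2) by (cases "x = e") auto
  qed
  then have "is_handle a k H"
    using div_l.IH div_l.prems(1) by blast
  then have "lab H e = Prim a k"
    using div_l.hyps(2) unfolding is_handle_def by auto
  with N(2) div_l.hyps(3) show ?case
    by simp
next
  case (div_r D d0 F N)
  then show ?case
    by simp
next
  case (times_l G e F A)
  have adm: "admissible_upto_teq a k (Times F)"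
    using times_l.prems(2) times_l.hyps(2,3) by metis
  have "wf_tp (Times F)"
    using times_l.hyps(2-4) unfolding seq_ok_def wfg_t_def by metis
  then have "wfg F"
    by (cases rule: wf_tp.cases) auto
  moreover have "is_handle a k (repl G (\<lambda>x. if x = e then Some F else None))"
    using times_l.IH times_l.prems(1) repl_single_admissible_labels[OF adm times_l.prems(2)] by blast
  ultimately show ?case
    using repl_admissible_Times_not_handle[OF adm _ times_l.hyps(2)] by blast
next
  case (times_r M Hs G)
  then show ?case
    by simp
qed

theorem corollary1:
  fixes a k :: nat and \<T> :: "tp set" and H :: "tp hgraph"
  assumes "\<forall>T\<in>\<T>. wf_tp T"
    and "\<forall>T\<in>\<T>. \<forall>B. subtype B T \<longrightarrow> \<not> skeleton B"
    and "\<forall>T\<in>\<T>. lonely (Prim a k) T"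
    and "\<forall>e\<in>edges H. lab H e \<in> \<T> \<union> {Prim a k}"
    and "HL H (Prim a k)"
  shows "giso (=) H (handle (Prim a k))"
proof -
  have "\<forall>e\<in>edges H. admissible a k (lab H e)"
    using assms(2-4) unfolding admissible_def by blast
  then have "is_handle a k H"
    using HL_Prim_is_handle[OF assms(5)] admissible_imp_admissible_upto_teq by blast
  then show ?thesis
    by (rule is_handle_giso_handle)
qed

end
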